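(* Let $f:\mathbb{R}^p\to\mathbb{R}\cup\{+\infty\}$ be $\mu_f$-strongly convex and $L_f$-smooth, and $g:\mathbb{R}^p\to\mathbb{R}\cup\{+\infty\}$ proper, closed, convex. Fix $x^0\in\operatorname{dom} f\cap\operatorname{dom} g$, $\xi^0\in\partial g(x^0)$, and for $\tau\in(0,1]$ let $x^\ast_\tau$ be the minimizer of $\tau f(x)-(1-\tau)\langle\xi^0,x\rangle+g(x)$. Let $0<m\le L<+\infty$ satisfy $\omega:=\frac1m\sqrt{(L-2\mu_f)m+L_f^2}<1$. Let $\{\tau_k\}\subset(0,1]$ and let $\{x^k\}$ be generated by $x^{k+1}:=\operatorname{prox}^{H_k}_{\frac{1}{\tau_{k+1}}g}\big(x^k-H_k^{-1}(\nabla f(x^k)-(\tfrac{1}{\tau_{k+1}}-1)\xi^0)\big)$ with $H_k\in\mathbb{S}^p_{++}$, $m\mathbb{I}\preceq H_k\preceq L\mathbb{I}$. Then $$\|x^{k+1}-x^\ast_{\tau_{k+1}}\|_2\le\omega\|x^k-x^\ast_{\tau_{k+1}}\|_2.$$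
   Context: $L_f$-smooth: $\|\nabla f(x)-\nabla f(y)\|_2\le L_f\|x-y\|_2$. For $H\in\mathbb{S}^p_{++}$ (symmetric positive definite), $\|u\|_H:=\langle Hu,u\rangle^{1/2}$ and $\operatorname{prox}^H_h(x):=\arg\min_u\{h(u)+\tfrac12\|u-x\|_H^2\}$. *)

theory Defs
  imports "HOL-Analysis.Analysis"
begin

definition proper_fun :: "('a \<Rightarrow> ereal) \<Rightarrow> bool" where
  "proper_fun g \<longleftrightarrow> (\<forall>x. g x \<noteq> -\<infinity>) \<and> (\<exists>x. g x < \<infinity>)"

definition closed_fun :: "('a::topological_space \<Rightarrow> ereal) \<Rightarrow> bool" where
  "closed_fun g \<longleftrightarrow> closed {(x, t::real). g x \<le> ereal t}"

definition convex_fun :: "('a::real_vector \<Rightarrow> ereal) \<Rightarrow> bool" where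
  "convex_fun g \<longleftrightarrow> (\<forall>x y t. 0 \<le> t \<and> t \<le> 1 \<longrightarrow>
      g (t *\<^sub>R x + (1 - t) *\<^sub>R y) \<le> ereal t * g x + ereal (1 - t) * g y)"

definition subdiff :: "('a::real_inner \<Rightarrow> ereal) \<Rightarrow> 'a \<Rightarrow> 'a set" where
  "subdiff g x = {\<xi>. \<bar>g x\<bar> \<noteq> \<infinity> \<and> (\<forall>y. g x + ereal (\<xi> \<bullet> (y - x)) \<le> g y)}"

definition strongly_convex_fun :: "real \<Rightarrow> ('a::real_normed_vector \<Rightarrow> real) \<Rightarrow> bool" where
  "strongly_convex_fun \<mu> f \<longleftrightarrow> (\<forall>x y t. 0 \<le> t \<and> t \<le> 1 \<longrightarrow>
      f (t *\<^sub>R x + (1 - t) *\<^sub>R y) \<le> t * f x + (1 - t) * f y - \<mu> / 2 * t * (1 - t) * (norm (x - y))\<^sup>2)"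

definition Hnorm :: "real^'n^'n \<Rightarrow> real^'n \<Rightarrow> real" where
  "Hnorm H u = sqrt ((H *v u) \<bullet> u)"

definition is_proxH :: "real^'n^'n \<Rightarrow> (real^'n \<Rightarrow> ereal) \<Rightarrow> real^'n \<Rightarrow> real^'n \<Rightarrow> bool" where
  "is_proxH H h x u \<longleftrightarrow> (\<forall>v. h u + ereal (1/2 * (Hnorm H (u - x))\<^sup>2) \<le> h v + ereal (1/2 * (Hnorm H (v - x))\<^sup>2))"

end

theory Submission
  imports Defs
begin

(* Both iterates are proximal points of the same map u |-> prox^{H_k}_{g/tau}(u): x^{k+1} by
   definition, and xstar_tau because its first-order optimality condition says exactly that
   xstar_tau = prox^{H_k}_{g/tau}(y), where y is the forward step taken from xstar_tau itself.
   Monotonicity of the subdifferential makes this proximal map nonexpansive in the H_k-norm, so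
   with d = x^k - xstar_tau and D = grad f(x^k) - grad f(xstar_tau) the error
   e = x^{k+1} - xstar_tau satisfies |e|_H^2 <= |d - H^-1 D|_H^2 = |d|_H^2 - 2 <D, d> + <D, H^-1 D>.
   The bounds m I <= H_k <= L I, strong monotonicity <D, d> >= mu |d|^2 and |D| <= L_f |d| then
   give m^2 |e|^2 <= ((L - 2 mu) m + L_f^2) |d|^2. *)

lemma proper_fun_scale:
  assumes "proper_fun g" "0 < s"
  shows "proper_fun (\<lambda>x. ereal s * g x)"
proof -
  obtain z where "g z < \<infinity>" using assms(1) unfolding proper_fun_def by blast
  then have "ereal s * g z < \<infinity>" using assms(2) by (cases "g z") auto
  moreover have "ereal s * g x \<noteq> -\<infinity>" for x
    using assms unfolding proper_fun_def by (cases "g x") auto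
  ultimately show ?thesis unfolding proper_fun_def by blast
qed

lemma convex_fun_scale:
  assumes "convex_fun g" "0 \<le> s"
  shows "convex_fun (\<lambda>x. ereal s * g x)"
  unfolding convex_fun_def
proof (intro allI impI)
  fix x y and t :: real
  assume t: "0 \<le> t \<and> t \<le> 1"
  have "ereal s * g (t *\<^sub>R x + (1 - t) *\<^sub>R y) \<le> ereal s * (ereal t * g x + ereal (1 - t) * g y)"
    using assms t unfolding convex_fun_def by (simp add: ereal_mult_left_mono)
  also have "\<dots> = (ereal t * g x + ereal (1 - t) * g y) * ereal s"
    by (rule mult.commute)
  also have "\<dots> = ereal t * g x * ereal s + ereal (1 - t) * g y * ereal s"
    by (rule distrib_left_ereal_nn[OF assms(2)])
  also have "\<dots> = ereal t * (ereal s * g x) + ereal (1 - t) * (ereal s * g y)"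
    by (simp add: mult_ac)
  finally show "ereal s * g (t *\<^sub>R x + (1 - t) *\<^sub>R y)
      \<le> ereal t * (ereal s * g x) + ereal (1 - t) * (ereal s * g y)" .
qed

lemma subdiff_scale:
  assumes "\<xi> \<in> subdiff g x" "0 < s"
  shows "s *\<^sub>R \<xi> \<in> subdiff (\<lambda>x. ereal s * g x) x"
proof -
  obtain a where a: "g x = ereal a" using assms(1) unfolding subdiff_def by (cases "g x") auto
  have "ereal (s * a) + ereal ((s *\<^sub>R \<xi>) \<bullet> (y - x)) \<le> ereal s * g y" for y
  proof (cases "g y")
    case (real b)
    have "g x + ereal (\<xi> \<bullet> (y - x)) \<le> g y" using assms(1) unfolding subdiff_def by blast
    then have "a + \<xi> \<bullet> (y - x) \<le> b" using a real by simp
    then have "s * (a + \<xi> \<bullet> (y - x)) \<le> s * b" using assms(2) by simp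
    then show ?thesis using real by (simp add: algebra_simps)
  qed (use assms a in \<open>auto simp: subdiff_def dest: spec[of _ y]\<close>)
  then show ?thesis using a unfolding subdiff_def by simp
qed

lemma subdiff_monotone:
  assumes "\<xi> \<in> subdiff g x" "\<eta> \<in> subdiff g y"
  shows "0 \<le> (\<xi> - \<eta>) \<bullet> (x - y)"
proof -
  obtain a b where a: "g x = ereal a" and b: "g y = ereal b"
    using assms unfolding subdiff_def by (cases "g x"; cases "g y") auto
  have "g x + ereal (\<xi> \<bullet> (y - x)) \<le> g y" "g y + ereal (\<eta> \<bullet> (x - y)) \<le> g x"
    using assms unfolding subdiff_def by blast+
  then show ?thesis using a b by (simp add: inner_diff_left inner_diff_right)
qed

lemma difference_quotient_tendsto_at_right:
  assumes "(q has_real_derivative D) (at 0)"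
  shows "((\<lambda>t. (q t - q 0) / t) \<longlongrightarrow> D) (at_right 0)"
proof -
  have "((\<lambda>t. (q t - q 0) / (t - 0)) \<longlongrightarrow> D) (at 0)"
    using assms by (simp add: DERIV_def has_field_derivative_iff)
  then show ?thesis by (simp add: filterlim_at_split)
qed

lemma tendsto_at_right_0_le:
  fixes r s :: "real \<Rightarrow> real"
  assumes "\<And>t. 0 < t \<Longrightarrow> t \<le> 1 \<Longrightarrow> r t \<le> s t"
    and "(r \<longlongrightarrow> R) (at_right 0)" and "(s \<longlongrightarrow> S) (at_right 0)"
  shows "R \<le> S"
proof (rule tendsto_le[OF _ assms(3) assms(2)])
  show "\<forall>\<^sub>F t in at_right 0. r t \<le> s t"
    unfolding eventually_at_right_field by (rule exI[of _ 1]) (auto intro: assms(1))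
qed simp

lemma has_derivative_along_line:
  assumes "(f has_derivative f') (at x)"
  shows "((\<lambda>t. f (x + t *\<^sub>R w)) has_real_derivative f' w) (at 0)"
proof -
  have "((\<lambda>t. x + t *\<^sub>R w) has_derivative (\<lambda>t. t *\<^sub>R w)) (at 0)"
    by (auto intro!: derivative_eq_intros)
  from diff_chain_at[OF this] assms
  have "((\<lambda>t. f (x + t *\<^sub>R w)) has_derivative (\<lambda>t. f' (t *\<^sub>R w))) (at 0)"
    by (simp add: o_def)
  moreover have "(\<lambda>t. f' (t *\<^sub>R w)) = (*) (f' w)"
    using has_derivative_linear[OF assms] by (auto simp: fun_eq_iff linear_cmul)
  ultimately show ?thesis unfolding has_field_derivative_def by simp
qed

lemma neg_gradient_in_subdiff_at_minimizer:
  fixes \<phi> :: "'a::real_inner \<Rightarrow> real" and h :: "'a \<Rightarrow> ereal"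
  assumes min: "\<And>v. ereal (\<phi> x) + h x \<le> ereal (\<phi> v) + h v"
    and deriv: "(\<phi> has_derivative (\<lambda>v. G \<bullet> v)) (at x)"
    and proper: "proper_fun h" and convex: "convex_fun h"
  shows "- G \<in> subdiff h x"
proof -
  obtain z where "h z < \<infinity>" using proper unfolding proper_fun_def by blast
  with min[of z] have "h x \<noteq> \<infinity>" by auto
  moreover have "h x \<noteq> -\<infinity>" using proper unfolding proper_fun_def by blast
  ultimately obtain a where a: "h x = ereal a" by (cases "h x") auto
  have "ereal a + ereal (- G \<bullet> (y - x)) \<le> h y" for y
  proof (cases "h y")
    case (real b)
    let ?q = "\<lambda>t. \<phi> (x + t *\<^sub>R (y - x))"
    have "a - b \<le> (?q t - ?q 0) / t" if t: "0 < t" "t \<le> 1" for t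
    proof -
      have "x + t *\<^sub>R (y - x) = t *\<^sub>R y + (1 - t) *\<^sub>R x" by (simp add: algebra_simps)
      then have "h (x + t *\<^sub>R (y - x)) \<le> ereal t * h y + ereal (1 - t) * h x"
        using convex t unfolding convex_fun_def by simp
      then have conv: "h (x + t *\<^sub>R (y - x)) \<le> ereal (t * b + (1 - t) * a)"
        using a real by simp
      have "ereal (\<phi> x + a) \<le> ereal (?q t) + h (x + t *\<^sub>R (y - x))"
        using min[of "x + t *\<^sub>R (y - x)"] a by simp
      also have "\<dots> \<le> ereal (?q t) + ereal (t * b + (1 - t) * a)"
        using conv by (rule add_left_mono)
      finally have "t * (a - b) \<le> ?q t - ?q 0" by (simp add: algebra_simps)
      then show ?thesis using t by (simp add: le_divide_eq mult.commute)
    qed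
    then have "a - b \<le> G \<bullet> (y - x)"
      by (rule tendsto_at_right_0_le[OF _ tendsto_const
            difference_quotient_tendsto_at_right[OF has_derivative_along_line[OF deriv]]])
    then show ?thesis using real by simp
  next
    case MInf
    then show ?thesis using proper unfolding proper_fun_def by blast
  qed simp
  then show ?thesis using a unfolding subdiff_def by simp
qed

lemma weighted_minimizer_subdiff:
  fixes f :: "'a::real_inner \<Rightarrow> real"
  assumes deriv: "(f has_derivative (\<lambda>h. G \<bullet> h)) (at x)" and t: "0 < t"
    and "proper_fun g" "convex_fun g"
    and min: "\<And>y. ereal (t * f x - (1 - t) * (\<xi> \<bullet> x)) + g x
      \<le> ereal (t * f y - (1 - t) * (\<xi> \<bullet> y)) + g y"
  shows "(1 / t - 1) *\<^sub>R \<xi> - G \<in> subdiff (\<lambda>u. ereal (1 / t) * g u) x"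
proof -
  have "- (t *\<^sub>R G - (1 - t) *\<^sub>R \<xi>) \<in> subdiff g x"
    by (rule neg_gradient_in_subdiff_at_minimizer[where \<phi> = "\<lambda>v. t * f v - (1 - t) * (\<xi> \<bullet> v)",
          OF min _ assms(3,4)])
       (auto intro!: derivative_eq_intros deriv simp: inner_diff_left)
  from subdiff_scale[OF this, of "1 / t"] t show ?thesis by (simp add: algebra_simps)
qed

lemma strongly_convex_fun_first_order:
  fixes f :: "'a::real_normed_vector \<Rightarrow> real"
  assumes deriv: "(f has_derivative f') (at x)" and sc: "strongly_convex_fun \<mu> f"
  shows "f x + f' (y - x) + \<mu> / 2 * (norm (y - x))\<^sup>2 \<le> f y"
proof -
  let ?q = "\<lambda>t. f (x + t *\<^sub>R (y - x))"
  have "(?q t - ?q 0) / t \<le> f y - f x - \<mu> / 2 * (1 - t) * (norm (y - x))\<^sup>2"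
    if t: "0 < t" "t \<le> 1" for t
  proof -
    have "x + t *\<^sub>R (y - x) = t *\<^sub>R y + (1 - t) *\<^sub>R x" by (simp add: algebra_simps)
    then have "?q t \<le> t * f y + (1 - t) * f x - \<mu> / 2 * t * (1 - t) * (norm (y - x))\<^sup>2"
      using sc t unfolding strongly_convex_fun_def by auto
    then have "?q t - ?q 0 \<le> t * (f y - f x - \<mu> / 2 * (1 - t) * (norm (y - x))\<^sup>2)"
      by (simp add: algebra_simps)
    then show ?thesis using t by (simp add: divide_le_eq mult.commute)
  qed
  then have "f' (y - x) \<le> f y - f x - \<mu> / 2 * (1 - 0) * (norm (y - x))\<^sup>2"
    by (rule tendsto_at_right_0_le[OF _
          difference_quotient_tendsto_at_right[OF has_derivative_along_line[OF deriv]]])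
       (auto intro!: tendsto_eq_intros)
  then show ?thesis by simp
qed

lemma strongly_convex_fun_gradient_monotone:
  fixes f :: "'a::real_inner \<Rightarrow> real"
  assumes "(f has_derivative (\<lambda>h. ga \<bullet> h)) (at a)" "(f has_derivative (\<lambda>h. gb \<bullet> h)) (at b)"
    and "strongly_convex_fun \<mu> f"
  shows "\<mu> * (norm (a - b))\<^sup>2 \<le> (ga - gb) \<bullet> (a - b)"
proof -
  have "f a + ga \<bullet> (b - a) + \<mu> / 2 * (norm (b - a))\<^sup>2 \<le> f b"
    and "f b + gb \<bullet> (a - b) + \<mu> / 2 * (norm (a - b))\<^sup>2 \<le> f a"
    using strongly_convex_fun_first_order assms by blast+
  then show ?thesis by (simp add: norm_minus_commute inner_diff_left inner_diff_right)
qed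

lemma symmetric_matrix_inner_commute:
  fixes H :: "real^'n^'n"
  assumes "transpose H = H"
  shows "(H *v a) \<bullet> b = (H *v b) \<bullet> a"
  by (metis assms dot_lmul_matrix inner_commute vector_transpose_matrix)

lemma pos_def_matrix_inv_right:
  fixes H :: "real^'n^'n"
  assumes "\<And>u. u \<noteq> 0 \<Longrightarrow> 0 < (H *v u) \<bullet> u"
  shows "H *v (matrix_inv H *v v) = v"
proof -
  have "\<forall>u. H *v u = 0 \<longrightarrow> u = 0" using assms by (metis inner_zero_left less_irrefl)
  then have "invertible H"
    using matrix_left_invertible_ker invertible_left_inverse by blast
  then have "H ** matrix_inv H = mat 1"
    unfolding invertible_def matrix_inv_def by (metis (mono_tags, lifting) someI_ex)
  then show ?thesis by (metis matrix_vector_mul_assoc matrix_vector_mul_lid)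
qed

lemma Hnorm_power2:
  assumes "0 \<le> (H *v u) \<bullet> u"
  shows "(Hnorm H u)\<^sup>2 = (H *v u) \<bullet> u"
  using assms unfolding Hnorm_def by simp

lemma has_derivative_half_quadratic_form:
  fixes H :: "real^'n^'n"
  assumes "transpose H = H"
  shows "((\<lambda>v. 1 / 2 * ((H *v (v - y)) \<bullet> (v - y))) has_derivative (\<lambda>w. (H *v (x - y)) \<bullet> w)) (at x)"
proof -
  have "((\<lambda>v. H *v (v - y)) has_derivative (\<lambda>w. H *v w)) (at x)"
    by (rule bounded_linear.has_derivative[OF matrix_vector_mul_bounded_linear])
       (auto intro!: derivative_eq_intros)
  moreover have "((\<lambda>v. v - y) has_derivative (\<lambda>w. w)) (at x)"
    by (auto intro!: derivative_eq_intros)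
  ultimately have "((\<lambda>v. (H *v (v - y)) \<bullet> (v - y)) has_derivative
      (\<lambda>w. (H *v (x - y)) \<bullet> w + (H *v w) \<bullet> (x - y))) (at x)"
    by (rule has_derivative_inner)
  from has_derivative_mult_right[OF this, of "1 / 2"] show ?thesis
    using symmetric_matrix_inner_commute[OF assms] by simp
qed

lemma is_proxH_subdiff:
  fixes H :: "real^'n^'n"
  assumes sym: "transpose H = H" and psd: "\<And>u. 0 \<le> (H *v u) \<bullet> u"
    and "proper_fun h" "convex_fun h" and prox: "is_proxH H h y u"
  shows "H *v (y - u) \<in> subdiff h u"
proof -
  have "ereal (1 / 2 * ((H *v (u - y)) \<bullet> (u - y))) + h u
      \<le> ereal (1 / 2 * ((H *v (v - y)) \<bullet> (v - y))) + h v" for v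
    using prox unfolding is_proxH_def Hnorm_power2[OF psd] by (simp add: add.commute)
  from neg_gradient_in_subdiff_at_minimizer[OF this has_derivative_half_quadratic_form[OF sym]
      assms(3,4)]
  show ?thesis by (simp add: matrix_vector_mult_diff_distrib)
qed

lemma subdiff_resolvent_nonexpansive:
  fixes H :: "real^'n^'n"
  assumes sym: "transpose H = H" and psd: "\<And>u. 0 \<le> (H *v u) \<bullet> u"
    and "H *v (y1 - u1) \<in> subdiff h u1" "H *v (y2 - u2) \<in> subdiff h u2"
  shows "(H *v (u1 - u2)) \<bullet> (u1 - u2) \<le> (H *v (y1 - y2)) \<bullet> (y1 - y2)"
proof -
  define a b where "a = u1 - u2" and "b = y1 - y2"
  have "H *v (y1 - u1) - H *v (y2 - u2) = H *v b - H *v a"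
    unfolding a_def b_def by (simp add: matrix_vector_mult_diff_distrib)
  then have "(H *v a) \<bullet> a \<le> (H *v b) \<bullet> a"
    using subdiff_monotone[OF assms(3,4)] unfolding a_def by (simp add: inner_diff_left)
  moreover have "0 \<le> (H *v (b - a)) \<bullet> (b - a)" by (rule psd)
  then have "0 \<le> (H *v b) \<bullet> b - 2 * ((H *v b) \<bullet> a) + (H *v a) \<bullet> a"
    using symmetric_matrix_inner_commute[OF sym, of a b]
    by (simp add: matrix_vector_mult_diff_distrib inner_diff_left inner_diff_right)
  ultimately show ?thesis unfolding a_def b_def by linarith
qed

lemma inner_inverse_quadratic_form_le:
  fixes H :: "real^'n^'n"
  assumes m: "0 < m" and lower: "\<And>u. m * (norm u)\<^sup>2 \<le> (H *v u) \<bullet> u" and Hw: "H *v w = z"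
  shows "m * (z \<bullet> w) \<le> (norm z)\<^sup>2"
proof -
  have zw: "z \<bullet> w \<le> norm z * norm w" by (rule norm_cauchy_schwarz)
  have "m * norm w * norm w \<le> norm z * norm w"
    using lower[of w] zw Hw by (simp add: power2_eq_square mult.assoc)
  then have "m * norm w \<le> norm z"
    by (cases "norm w = 0") (auto simp: mult_le_cancel_right)
  then have "m * (norm z * norm w) \<le> norm z * norm z"
    by (metis mult.left_commute mult_left_mono norm_ge_zero)
  moreover have "m * (z \<bullet> w) \<le> m * (norm z * norm w)" using zw m by simp
  ultimately show ?thesis by (simp add: power2_eq_square)
qed

lemma forward_step_quadratic_bound:
  fixes H :: "real^'n^'n"
  assumes sym: "transpose H = H" and m: "0 < m"
    and lower: "\<And>u. m * (norm u)\<^sup>2 \<le> (H *v u) \<bullet> u" and upper: "(H *v d) \<bullet> d \<le> L * (norm d)\<^sup>2"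
    and Hw: "H *v w = z"
    and mono: "\<mu> * (norm d)\<^sup>2 \<le> z \<bullet> d" and lip: "norm z \<le> Lf * norm d"
  shows "m * ((H *v (d - w)) \<bullet> (d - w)) \<le> ((L - 2 * \<mu>) * m + Lf\<^sup>2) * (norm d)\<^sup>2"
proof -
  have expand: "(H *v (d - w)) \<bullet> (d - w) = (H *v d) \<bullet> d - 2 * (z \<bullet> d) + z \<bullet> w"
    using symmetric_matrix_inner_commute[OF sym, of d w]
    by (simp add: Hw matrix_vector_mult_diff_distrib inner_diff_left inner_diff_right inner_commute)
  have "m * ((H *v (d - w)) \<bullet> (d - w)) = m * ((H *v d) \<bullet> d) - 2 * (m * (z \<bullet> d)) + m * (z \<bullet> w)"
    unfolding expand by (simp add: algebra_simps)
  also have "\<dots> \<le> m * (L * (norm d)\<^sup>2) - 2 * (m * (\<mu> * (norm d)\<^sup>2)) + Lf\<^sup>2 * (norm d)\<^sup>2"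
  proof -
    have "(norm z)\<^sup>2 \<le> (Lf * norm d)\<^sup>2" using lip by (simp add: power_mono)
    then have "m * (z \<bullet> w) \<le> Lf\<^sup>2 * (norm d)\<^sup>2"
      using inner_inverse_quadratic_form_le[OF m lower Hw] by (simp add: power_mult_distrib)
    moreover have "m * ((H *v d) \<bullet> d) \<le> m * (L * (norm d)\<^sup>2)" using upper m by simp
    moreover have "m * (\<mu> * (norm d)\<^sup>2) \<le> m * (z \<bullet> d)" using mono m by simp
    ultimately show ?thesis by linarith
  qed
  also have "\<dots> = ((L - 2 * \<mu>) * m + Lf\<^sup>2) * (norm d)\<^sup>2" by (simp add: algebra_simps)
  finally show ?thesis .
qed

lemma le_sqrt_div_of_power2_le:
  fixes a b m R :: real
  assumes "0 < m" "0 \<le> a" "0 \<le> b" "m\<^sup>2 * a\<^sup>2 \<le> R * b\<^sup>2"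
  shows "a \<le> sqrt R / m * b"
proof -
  have "m * a = sqrt (m\<^sup>2 * a\<^sup>2)" using assms by (simp add: real_sqrt_mult)
  also have "\<dots> \<le> sqrt (R * b\<^sup>2)" using assms(4) by (rule real_sqrt_le_mono)
  also have "\<dots> = sqrt R * b" using assms(3) by (simp add: real_sqrt_mult)
  finally show ?thesis using assms(1) by (simp add: field_simps)
qed

lemma forward_backward_error_bound:
  fixes H :: "real^'n^'n"
  assumes sym: "transpose H = H" and m: "0 < m"
    and lower: "\<And>u. m * (norm u)\<^sup>2 \<le> (H *v u) \<bullet> u" and upper: "(H *v d) \<bullet> d \<le> L * (norm d)\<^sup>2"
    and Hw: "H *v w = z"
    and mono: "\<mu> * (norm d)\<^sup>2 \<le> z \<bullet> d" and lip: "norm z \<le> Lf * norm d"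
    and nonexp: "(H *v e) \<bullet> e \<le> (H *v (d - w)) \<bullet> (d - w)"
  shows "norm e \<le> sqrt ((L - 2 * \<mu>) * m + Lf\<^sup>2) / m * norm d"
proof -
  have "m\<^sup>2 * (norm e)\<^sup>2 = m * (m * (norm e)\<^sup>2)" by (simp add: power2_eq_square)
  also have "\<dots> \<le> m * ((H *v (d - w)) \<bullet> (d - w))"
    using lower[of e] nonexp m by simp
  also have "\<dots> \<le> ((L - 2 * \<mu>) * m + Lf\<^sup>2) * (norm d)\<^sup>2"
    by (rule forward_step_quadratic_bound[OF sym m lower upper Hw mono lip])
  finally show ?thesis by (rule le_sqrt_div_of_power2_le[OF m norm_ge_zero norm_ge_zero])
qed

theorem lemmaB3:
  fixes f :: "real^'n \<Rightarrow> real" and gradf :: "real^'n \<Rightarrow> real^'n"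
    and g :: "real^'n \<Rightarrow> ereal"
    and \<mu>f Lf m L :: real
    and x0 \<xi>0 :: "real^'n"
    and xstar :: "real \<Rightarrow> real^'n"
    and \<tau> :: "nat \<Rightarrow> real"
    and x :: "nat \<Rightarrow> real^'n"
    and H :: "nat \<Rightarrow> real^'n^'n"
    and k :: nat
  assumes grad: "\<And>y. (f has_derivative (\<lambda>h. gradf y \<bullet> h)) (at y)"
    and smooth: "\<And>y z. norm (gradf y - gradf z) \<le> Lf * norm (y - z)"
    and mu_pos: "\<mu>f > 0"
    and sconv: "strongly_convex_fun \<mu>f f"
    and g_proper: "proper_fun g" and g_closed: "closed_fun g" and g_convex: "convex_fun g"
    and x0_dom: "g x0 < \<infinity>"
    and xi0: "\<xi>0 \<in> subdiff g x0"
    and xstar_min: "\<And>t y. 0 < t \<Longrightarrow> t \<le> 1 \<Longrightarrow>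
        ereal (t * f (xstar t) - (1 - t) * (\<xi>0 \<bullet> xstar t)) + g (xstar t)
          \<le> ereal (t * f y - (1 - t) * (\<xi>0 \<bullet> y)) + g y"
    and m_pos: "0 < m" and mL: "m \<le> L"
    and omega: "sqrt ((L - 2 * \<mu>f) * m + Lf\<^sup>2) / m < 1"
    and tau: "\<And>j. 0 < \<tau> j \<and> \<tau> j \<le> 1"
    and x_start: "x 0 = x0"
    and H_sym: "\<And>j. transpose (H j) = H j"
    and H_pd: "\<And>j u. u \<noteq> 0 \<Longrightarrow> (H j *v u) \<bullet> u > 0"
    and H_bounds: "\<And>j u. m * (norm u)\<^sup>2 \<le> (H j *v u) \<bullet> u \<and> (H j *v u) \<bullet> u \<le> L * (norm u)\<^sup>2"
    and iter: "\<And>j. is_proxH (H j) (\<lambda>u. ereal (1 / \<tau> (Suc j)) * g u)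
        (x j - matrix_inv (H j) *v (gradf (x j) - (1 / \<tau> (Suc j) - 1) *\<^sub>R \<xi>0)) (x (Suc j))"
  shows "norm (x (Suc k) - xstar (\<tau> (Suc k)))
           \<le> sqrt ((L - 2 * \<mu>f) * m + Lf\<^sup>2) / m * norm (x k - xstar (\<tau> (Suc k)))"
proof -
  define t where "t = \<tau> (Suc k)"
  define h where "h u = ereal (1 / t) * g u" for u
  define fwd where "fwd z = z - matrix_inv (H k) *v (gradf z - (1 / t - 1) *\<^sub>R \<xi>0)" for z
  define xs where "xs = xstar t"
  have t: "0 < t" "t \<le> 1" using tau unfolding t_def by auto
  have lower: "\<And>u. m * (norm u)\<^sup>2 \<le> (H k *v u) \<bullet> u" and upper: "\<And>u. (H k *v u) \<bullet> u \<le> L * (norm u)\<^sup>2"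
    using H_bounds by blast+
  have psd: "\<And>u. 0 \<le> (H k *v u) \<bullet> u"
    using lower m_pos by (meson order_trans mult_nonneg_nonneg less_imp_le zero_le_power2)
  have inv: "\<And>v. H k *v (matrix_inv (H k) *v v) = v" by (rule pos_def_matrix_inv_right[OF H_pd])
  have "proper_fun h" "convex_fun h"
    using proper_fun_scale[OF g_proper] convex_fun_scale[OF g_convex] t unfolding h_def by simp_all
  then have "H k *v (fwd (x k) - x (Suc k)) \<in> subdiff h (x (Suc k))"
    using is_proxH_subdiff[OF H_sym psd] iter[of k] unfolding h_def fwd_def t_def by blast
  moreover have "H k *v (fwd xs - xs) \<in> subdiff h xs"
    using weighted_minimizer_subdiff[OF grad t(1) g_proper g_convex xstar_min[OF t]] inv
    unfolding fwd_def h_def xs_def by (simp add: algebra_simps)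
  ultimately have "(H k *v (x (Suc k) - xs)) \<bullet> (x (Suc k) - xs)
      \<le> (H k *v (fwd (x k) - fwd xs)) \<bullet> (fwd (x k) - fwd xs)"
    by (rule subdiff_resolvent_nonexpansive[OF H_sym psd])
  moreover have "fwd (x k) - fwd xs = x k - xs - matrix_inv (H k) *v (gradf (x k) - gradf xs)"
    unfolding fwd_def by (simp add: matrix_vector_mult_diff_distrib algebra_simps)
  ultimately show ?thesis
    unfolding t_def[symmetric] xs_def[symmetric]
    by (intro forward_backward_error_bound[OF H_sym m_pos lower upper inv
          strongly_convex_fun_gradient_monotone[OF grad grad sconv] smooth]) simp
qed

end
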